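(* Every $\alpha_{2^-}$ topological space is $\alpha_2$.
   Context: Convention: a "sequence" is a countably infinite set. A countably infinite set $A$ in a space $X$ converges to $x\in X$ if $x\notin A$ and every neighborhood of $x$ contains all but finitely many elements of $A$. For a double-indexed family, $\lim_m x_{nm}=x$ means $x_{nm}\neq x$ for all $m$ and every neighborhood of $x$ contains $x_{nm}$ for all but finitely many $m$. A space $X$ is $\alpha_2$ if for each $x\in X$ and all pairwise disjoint sequences $S_1,S_2,\dots\subseteq X$, each converging to $x$, there is a sequence $S\subseteq\bigcup_n S_n$ converging to $x$ such that $S_n\cap S$ is infinite for all $n$. A space $X$ is $\alpha_{2^-}$ if for each $x\in X$, whenever $\lim_m x_{nm}=x$ for all $n\in\mathbb N$, there are $m_1<m_2<\dots$ such that the set $\bigcup_n\{x_{1m_n},\dots,x_{nm_n}\}$ converges to $x$. *)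

theory Defs
  imports "HOL-Analysis.Analysis"
begin

text \<open>A "sequence" is a countably infinite set. It converges to x if x is not in it
and every (open) neighbourhood of x contains all but finitely many of its elements.\<close>
definition seq_converges :: "'a topology \<Rightarrow> 'a set \<Rightarrow> 'a \<Rightarrow> bool" where
  "seq_converges X A x \<longleftrightarrow>
     A \<subseteq> topspace X \<and> countable A \<and> infinite A \<and> x \<in> topspace X \<and> x \<notin> A \<and>
     (\<forall>U. openin X U \<and> x \<in> U \<longrightarrow> finite (A - U))"

definition fam_lim :: "'a topology \<Rightarrow> (nat \<Rightarrow> 'a) \<Rightarrow> 'a \<Rightarrow> bool" where
  "fam_lim X f x \<longleftrightarrow>
     range f \<subseteq> topspace X \<and> x \<in> topspace X \<and> (\<forall>m. f m \<noteq> x) \<and>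
     (\<forall>U. openin X U \<and> x \<in> U \<longrightarrow> finite {m. f m \<notin> U})"

definition alpha2 :: "'a topology \<Rightarrow> bool" where
  "alpha2 X \<longleftrightarrow> (\<forall>x \<in> topspace X. \<forall>S :: nat \<Rightarrow> 'a set.
     (\<forall>n. seq_converges X (S n) x) \<and> (\<forall>i j. i \<noteq> j \<longrightarrow> S i \<inter> S j = {}) \<longrightarrow>
     (\<exists>T. T \<subseteq> (\<Union>n. S n) \<and> seq_converges X T x \<and> (\<forall>n. infinite (T \<inter> S n))))"

text \<open>Indices n, i start at 1 as in the paper; the values x 0 m are irrelevant.\<close>
definition alpha2minus :: "'a topology \<Rightarrow> bool" where
  "alpha2minus X \<longleftrightarrow> (\<forall>x \<in> topspace X. \<forall>xx :: nat \<Rightarrow> nat \<Rightarrow> 'a.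
     (\<forall>n\<ge>1. fam_lim X (xx n) x) \<longrightarrow>
     (\<exists>m :: nat \<Rightarrow> nat. strict_mono m \<and>
        seq_converges X (\<Union>n\<in>{1..}. {xx i (m n) | i. 1 \<le> i \<and> i \<le> n}) x))"

end

theory Submission
  imports Defs
begin

text \<open>Enumerate the n-th sequence as the n-th row of a double family; the alpha-2-minus
property yields a convergent diagonal set, which meets every row in infinitely many points
because row k contributes a point for every column index beyond k.\<close>

lemma fam_lim_from_nat_into:
  assumes "seq_converges X A x"
  shows "fam_lim X (from_nat_into A) x"
proof -
  have A: "A \<subseteq> topspace X" "x \<in> topspace X" "x \<notin> A" "countable A" "infinite A"
    and fin: "\<And>U. openin X U \<Longrightarrow> x \<in> U \<Longrightarrow> finite (A - U)"
    using assms by (auto simp: seq_converges_def)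
  have bij: "bij_betw (from_nat_into A) UNIV A"
    using A by (intro bij_betw_from_nat_into) auto
  hence inj: "inj (from_nat_into A)" and rng: "range (from_nat_into A) = A"
    by (auto simp: bij_betw_def)
  show ?thesis
    unfolding fam_lim_def
  proof (intro conjI allI impI)
    fix U assume U: "openin X U \<and> x \<in> U"
    have "finite (from_nat_into A -` (A - U))"
      using fin U inj by (blast intro: finite_vimageI)
    moreover have "{m. from_nat_into A m \<notin> U} \<subseteq> from_nat_into A -` (A - U)"
      using rng by auto
    ultimately show "finite {m. from_nat_into A m \<notin> U}"
      by (rule finite_subset[rotated])
  qed (use A rng in auto)
qed

lemma infinite_diagonal_inter_row:
  fixes xx :: "nat \<Rightarrow> nat \<Rightarrow> 'a" and m :: "nat \<Rightarrow> nat"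
  assumes "inj (xx k)" "strict_mono m" "k \<ge> 1"
  shows "infinite ((\<Union>n\<in>{1..}. {xx i (m n) | i. 1 \<le> i \<and> i \<le> n}) \<inter> range (xx k))"
proof -
  have "inj (xx k \<circ> m)"
    using assms(1,2) strict_mono_imp_inj_on by (blast intro: inj_compose)
  hence "infinite ((xx k \<circ> m) ` {k..})"
    by (metis finite_imageD infinite_Ici inj_on_subset subset_UNIV)
  moreover have "(xx k \<circ> m) ` {k..} \<subseteq>
      (\<Union>n\<in>{1..}. {xx i (m n) | i. 1 \<le> i \<and> i \<le> n}) \<inter> range (xx k)"
    using assms(3) by fastforce
  ultimately show ?thesis
    using finite_subset by blast
qed

theorem corollary2p4:
  fixes X :: "'a topology"
  assumes "alpha2minus X"
  shows "alpha2 X"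
  unfolding alpha2_def
proof (intro ballI allI impI)
  fix x and S :: "nat \<Rightarrow> 'a set"
  assume x: "x \<in> topspace X"
    and "(\<forall>n. seq_converges X (S n) x) \<and> (\<forall>i j. i \<noteq> j \<longrightarrow> S i \<inter> S j = {})"
  hence conv: "\<And>n. seq_converges X (S n) x" by blast
  \<comment> \<open>rows are indexed from 1 in \<open>alpha2minus\<close>\<close>
  define xx where "xx n = from_nat_into (S (n - 1))" for n
  have rows: "range (xx n) = S (n - 1)" "inj (xx n)" for n
    using conv[of "n - 1"] bij_betw_from_nat_into[of "S (n - 1)"]
    by (auto simp: xx_def seq_converges_def bij_betw_def)
  have "fam_lim X (xx n) x" for n
    unfolding xx_def using conv by (rule fam_lim_from_nat_into)
  then obtain m where m: "strict_mono m"
    and T: "seq_converges X (\<Union>n\<in>{1..}. {xx i (m n) | i. 1 \<le> i \<and> i \<le> n}) x"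
    using assms x unfolding alpha2minus_def by blast
  show "\<exists>T. T \<subseteq> (\<Union>n. S n) \<and> seq_converges X T x \<and> (\<forall>n. infinite (T \<inter> S n))"
  proof (intro exI conjI allI)
    show "(\<Union>n\<in>{1..}. {xx i (m n) | i. 1 \<le> i \<and> i \<le> n}) \<subseteq> (\<Union>n. S n)"
      using rows(1) by blast
    fix k
    show "infinite ((\<Union>n\<in>{1..}. {xx i (m n) | i. 1 \<le> i \<and> i \<le> n}) \<inter> S k)"
      using infinite_diagonal_inter_row[of xx "Suc k", OF rows(2) m] rows(1)[of "Suc k"] by simp
  qed (rule T)
qed

end
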